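(* Let $G$ be $\hbar$-perfect and let $G'$ be obtained from $G$ by copying one vertex $v$, i.e. adding a new vertex $v'$ whose neighbourhood is exactly the neighbourhood of $v$ in $G$ (so $v'$ is not adjacent to $v$). Then $G'$ is $\hbar$-perfect.
   Context: A realization of a graph $G$ on $\{1,\dots,n\}$ is a tuple $(S_1,\dots,S_n)$ of Pauli strings (tensor products of matrices from $\{I,X,Y,Z\}$) of common length with $S_i,S_j$ anticommuting iff $i\sim j$ and commuting otherwise; every graph has one. For $w\in\mathbb{R}^n_{\ge0}$, $\beta(G,w)=\sup_\rho\sum_iw_i\operatorname{tr}(\rho S_i)^2$ over density matrices $\rho$ (independent of the realization), and $\alpha(G,w)=\max\{\sum_{i\in I}w_i: I\text{ independent set of }G\}$. $G$ is $\hbar$-perfect if $\beta(G,w)=\alpha(G,w)$ for all $w\in\mathbb{R}^n_{\ge0}$. *)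

theory Defs
  imports Complex_Main "Jordan_Normal_Form.Matrix"
begin

text \<open>Graphs on the vertex set {0,...,n-1} (the paper's {1,...,n}, shifted),
  given by a symmetric irreflexive adjacency relation.\<close>

definition graph_on :: "nat \<Rightarrow> (nat \<Rightarrow> nat \<Rightarrow> bool) \<Rightarrow> bool" where
  "graph_on n E \<longleftrightarrow> (\<forall>i<n. \<forall>j<n. E i j = E j i) \<and> (\<forall>i<n. \<not> E i i)"

datatype pauli = PI | PX | PY | PZ

fun pauli_entry :: "pauli \<Rightarrow> nat \<Rightarrow> nat \<Rightarrow> complex" where
  "pauli_entry PI a b = (if a = b then 1 else 0)"
| "pauli_entry PX a b = (if a \<noteq> b then 1 else 0)"
| "pauli_entry PY a b = (if a = b then 0 else if a = 0 then - \<i> else \<i>)"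
| "pauli_entry PZ a b = (if a \<noteq> b then 0 else if a = 0 then 1 else -1)"

text \<open>The matrix of a Pauli string (tensor product of the factors), acting on
  (C^2)^{\<otimes> m}; the k-th tensor factor corresponds to bit k of the index.\<close>

definition pauli_string_mat :: "pauli list \<Rightarrow> complex mat" where
  "pauli_string_mat ps = (let m = length ps in
     mat (2 ^ m) (2 ^ m)
       (\<lambda>(i, j). \<Prod>k<m. pauli_entry (ps ! k) (i div 2 ^ k mod 2) (j div 2 ^ k mod 2)))"

definition realization :: "nat \<Rightarrow> (nat \<Rightarrow> nat \<Rightarrow> bool) \<Rightarrow> nat \<Rightarrow> (nat \<Rightarrow> pauli list) \<Rightarrow> bool" where
  "realization n E m S \<longleftrightarrow>
     (\<forall>i<n. length (S i) = m) \<and>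
     (\<forall>i<n. \<forall>j<n.
        (E i j \<longrightarrow> pauli_string_mat (S i) * pauli_string_mat (S j)
                      = - (pauli_string_mat (S j) * pauli_string_mat (S i))) \<and>
        (\<not> E i j \<longrightarrow> pauli_string_mat (S i) * pauli_string_mat (S j)
                      = pauli_string_mat (S j) * pauli_string_mat (S i)))"

definition mat_trace :: "complex mat \<Rightarrow> complex" where
  "mat_trace A = (\<Sum>i<dim_row A. A $$ (i, i))"

definition density_mat :: "nat \<Rightarrow> complex mat \<Rightarrow> bool" where
  "density_mat d \<rho> \<longleftrightarrow> \<rho> \<in> carrier_mat d d \<and>
     (\<forall>i<d. \<forall>j<d. \<rho> $$ (j, i) = cnj (\<rho> $$ (i, j))) \<and>
     (\<forall>x :: nat \<Rightarrow> complex. 0 \<le> Re (\<Sum>i<d. \<Sum>j<d. cnj (x i) * \<rho> $$ (i, j) * x j)) \<and>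
     mat_trace \<rho> = 1"

text \<open>beta(G,w) computed from the realization S (of common length m).
  Since rho and S_i are Hermitian, tr(rho S_i) is real.\<close>

definition beta :: "nat \<Rightarrow> nat \<Rightarrow> (nat \<Rightarrow> pauli list) \<Rightarrow> (nat \<Rightarrow> real) \<Rightarrow> real" where
  "beta n m S w = Sup {(\<Sum>i<n. w i * (Re (mat_trace (\<rho> * pauli_string_mat (S i))))\<^sup>2) | \<rho>.
                        density_mat (2 ^ m) \<rho>}"

definition independent_set :: "(nat \<Rightarrow> nat \<Rightarrow> bool) \<Rightarrow> nat set \<Rightarrow> bool" where
  "independent_set E I \<longleftrightarrow> (\<forall>i\<in>I. \<forall>j\<in>I. \<not> E i j)"

definition alpha :: "nat \<Rightarrow> (nat \<Rightarrow> nat \<Rightarrow> bool) \<Rightarrow> (nat \<Rightarrow> real) \<Rightarrow> real" where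
  "alpha n E w = Max {(\<Sum>i\<in>I. w i) | I. I \<subseteq> {..<n} \<and> independent_set E I}"

text \<open>hbar-perfect: beta = alpha for all nonnegative weights. beta is computed via
  an arbitrary realization (it is independent of the realization).\<close>

definition hbar_perfect :: "nat \<Rightarrow> (nat \<Rightarrow> nat \<Rightarrow> bool) \<Rightarrow> bool" where
  "hbar_perfect n E \<longleftrightarrow>
     (\<forall>m S w. realization n E m S \<longrightarrow> (\<forall>i<n. 0 \<le> w i) \<longrightarrow> beta n m S w = alpha n E w)"

definition copy_vertex :: "nat \<Rightarrow> (nat \<Rightarrow> nat \<Rightarrow> bool) \<Rightarrow> nat \<Rightarrow> (nat \<Rightarrow> nat \<Rightarrow> bool)" where
  "copy_vertex n E v = (\<lambda>i j. let c = (\<lambda>k. if k = n then v else k) in E (c i) (c j))"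

end

theory Submission
  imports Defs "Jordan_Normal_Form.Schur_Decomposition"
begin

(* Let S be a realization of the copied graph and T = S_v S_v'. As v and v' are non-adjacent
   twins, T is a Hermitian involution commuting with every S_i. Compressing a state rho onto
   the two eigenspaces of T writes the expectations tr(rho S_i) as a convex combination of those
   of two eigenstates of T, so by convexity of sum_i w_i tr(rho S_i)^2 one of these eigenstates
   does at least as well as rho. On an eigenstate of T we have tr(rho S_v') = +-tr(rho S_v), so
   the objective of the copied graph with weights w equals that of G with w_v replaced by
   w_v + w_v'. Hence beta is unchanged under this merging of weights; so is alpha, since v' may
   be added to every independent set containing v. *)

lemma sum_lessThan_power2_Suc:
  fixes h :: "nat \<Rightarrow> 'a::comm_monoid_add"
  shows "(\<Sum>l<2^Suc m. h l) = (\<Sum>b<2. \<Sum>l<2^m. h (l + b * 2^m))"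
proof -
  have "(\<Sum>l<2^Suc m. h l) = (\<Sum>l=0..<2^m + 2^m. h l)"
    by (simp add: lessThan_atLeast0 mult_2)
  also have "\<dots> = (\<Sum>l=0..<2^m. h l) + (\<Sum>l=2^m..<2^m + 2^m. h l)"
    by (rule sum.atLeastLessThan_concat[symmetric]) auto
  also have "(\<Sum>l=2^m..<2^m + 2^m. h l) = (\<Sum>l=0..<2^m. h (l + 2^m))"
    using sum.shift_bounds_nat_ivl[of h 0 "2^m" "2^m"] by simp
  finally show ?thesis by (simp add: numeral_2_eq_2 lessThan_atLeast0)
qed

lemma sum_prod_bits:
  fixes F :: "nat \<Rightarrow> nat \<Rightarrow> 'a::comm_semiring_1"
  shows "(\<Sum>l<2^m. \<Prod>k<m. F k (l div 2^k mod 2)) = (\<Prod>k<m. \<Sum>b<2. F k b)"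
proof (induction m)
  case 0
  then show ?case by simp
next
  case (Suc m)
  let ?g = "\<lambda>l. \<Prod>k<m. F k (l div 2^k mod 2)"
  have low: "(l + b * 2^m) div 2^k mod 2 = l div 2^k mod 2" if k_lt: "k < m" for l b k :: nat
  proof -
    obtain j where "m = Suc (k + j)" using less_imp_Suc_add[OF k_lt] by blast
    then have "l + b * 2^m = l + (2 * (b * 2^j)) * 2^k" by (simp add: power_add)
    then have "(l + b * 2^m) div 2^k = 2 * (b * 2^j) + l div 2^k"
      by (metis div_mult_self1 power_not_zero zero_neq_numeral)
    then show ?thesis by simp
  qed
  have high: "(l + b * 2^m) div 2^m mod 2 = b" if "l < 2^m" "b < 2" for l b :: nat
  proof -
    have "(l + b * 2^m) div 2^m = b + l div 2^m"
      by (metis div_mult_self1 power_not_zero zero_neq_numeral)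
    then show ?thesis using that by simp
  qed
  have "(\<Sum>l<2^Suc m. \<Prod>k<Suc m. F k (l div 2^k mod 2))
      = (\<Sum>b<2. \<Sum>l<2^m. \<Prod>k<Suc m. F k ((l + b * 2^m) div 2^k mod 2))"
    by (rule sum_lessThan_power2_Suc)
  also have "\<dots> = (\<Sum>b<2. \<Sum>l<2^m. ?g l * F m b)"
  proof (intro sum.cong refl)
    fix b l assume "b \<in> {..<2::nat}" "l \<in> {..<2^m::nat}"
    then have "(\<Prod>k<m. F k ((l + b * 2^m) div 2^k mod 2)) = ?g l"
      and "(l + b * 2^m) div 2^m mod 2 = b"
      by (auto intro!: prod.cong simp only: low high lessThan_iff)
    then show "(\<Prod>k<Suc m. F k ((l + b * 2^m) div 2^k mod 2)) = ?g l * F m b"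
      by simp
  qed
  also have "\<dots> = (\<Sum>l<2^m. ?g l) * (\<Sum>b<2. F m b)"
    by (simp add: sum_distrib_left sum_distrib_right)
  finally show ?case by (simp add: Suc)
qed

lemma eq_if_low_bits_eq:
  fixes i j :: nat
  assumes "i < 2^m" "j < 2^m" and "\<forall>k<m. i div 2^k mod 2 = j div 2^k mod 2"
  shows "i = j"
proof -
  have "bit i k = bit j k" for k
  proof (cases "k < m")
    case True
    then show ?thesis using assms(3) by (simp add: bit_iff_odd odd_iff_mod_2_eq_one)
  next
    case False
    then have "i < 2^k" "j < 2^k"
      using assms(1,2) power_increasing[of m k "2::nat"] by linarith+
    then show ?thesis by (simp add: bit_iff_odd)
  qed
  then show ?thesis by (simp add: bit_eq_iff)
qed

lemma dim_mat_adjoint [simp]: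
  "dim_row (mat_adjoint A) = dim_col A" "dim_col (mat_adjoint A) = dim_row A"
  by (simp_all add: mat_adjoint_def)

lemma index_mat_adjoint [simp]:
  "i < dim_col A \<Longrightarrow> j < dim_row A \<Longrightarrow> mat_adjoint A $$ (i, j) = conjugate (A $$ (j, i))"
  by (simp add: mat_adjoint_def mat_of_rows_index)

lemma mat_adjoint_mult:
  fixes A B :: "'a::conjugatable_field mat"
  assumes "A \<in> carrier_mat n k" "B \<in> carrier_mat k m"
  shows "mat_adjoint (A * B) = mat_adjoint B * mat_adjoint A"
proof -
  have "dim_row A = n" "dim_col A = k" "dim_row B = k" "dim_col B = m"
    using assms by auto
  then show ?thesis
    by (intro eq_matI) (simp_all add: scalar_prod_def sum_conjugate conjugate_dist_mul mult.commute)
qed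

lemma mat_adjoint_eq_iff:
  assumes "A \<in> carrier_mat n n"
  shows "mat_adjoint A = A \<longleftrightarrow> (\<forall>i<n. \<forall>j<n. A $$ (j, i) = cnj (A $$ (i, j)))"
proof
  assume adj: "mat_adjoint A = A"
  show "\<forall>i<n. \<forall>j<n. A $$ (j, i) = cnj (A $$ (i, j))"
  proof (intro allI impI)
    fix i j assume "i < n" "j < n"
    then have "mat_adjoint A $$ (j, i) = cnj (A $$ (i, j))" using assms by simp
    then show "A $$ (j, i) = cnj (A $$ (i, j))" using adj by simp
  qed
next
  assume herm: "\<forall>i<n. \<forall>j<n. A $$ (j, i) = cnj (A $$ (i, j))"
  show "mat_adjoint A = A"
  proof (rule eq_matI)
    fix i j assume "i < dim_row A" "j < dim_col A"
    then show "mat_adjoint A $$ (i, j) = A $$ (i, j)"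
      using assms herm[rule_format, of j i] by simp
  qed (use assms in simp_all)
qed

lemma mat_trace_mult_comm:
  assumes "A \<in> carrier_mat n m" "B \<in> carrier_mat m n"
  shows "mat_trace (A * B) = mat_trace (B * A)"
proof -
  have "mat_trace (A * B) = (\<Sum>i<n. \<Sum>k<m. A $$ (i, k) * B $$ (k, i))"
    using assms by (simp add: mat_trace_def scalar_prod_def lessThan_atLeast0)
  also have "\<dots> = (\<Sum>k<m. \<Sum>i<n. B $$ (k, i) * A $$ (i, k))"
    by (subst sum.swap) (simp add: mult.commute)
  also have "\<dots> = mat_trace (B * A)"
    using assms by (simp add: mat_trace_def scalar_prod_def lessThan_atLeast0)
  finally show ?thesis .
qed

lemma mat_trace_add:
  "A \<in> carrier_mat n n \<Longrightarrow> B \<in> carrier_mat n n \<Longrightarrow> mat_trace (A + B) = mat_trace A + mat_trace B"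
  by (simp add: mat_trace_def sum.distrib)

lemma mat_trace_smult: "A \<in> carrier_mat n n \<Longrightarrow> mat_trace (c \<cdot>\<^sub>m A) = c * mat_trace A"
  by (simp add: mat_trace_def sum_distrib_left)

lemma pauli_string_mat_carrier: "pauli_string_mat s \<in> carrier_mat (2^length s) (2^length s)"
  by (simp add: pauli_string_mat_def Let_def)

lemma dim_pauli_string_mat [simp]:
  "dim_row (pauli_string_mat s) = 2^length s" "dim_col (pauli_string_mat s) = 2^length s"
  by (simp_all add: pauli_string_mat_def Let_def)

lemma index_pauli_string_mat:
  "i < 2^length s \<Longrightarrow> j < 2^length s \<Longrightarrow> pauli_string_mat s $$ (i, j)
    = (\<Prod>k<length s. pauli_entry (s ! k) (i div 2^k mod 2) (j div 2^k mod 2))"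
  by (simp add: pauli_string_mat_def Let_def)

lemma pauli_entry_square:
  "a < 2 \<Longrightarrow> c < 2 \<Longrightarrow> (\<Sum>b<2. pauli_entry p a b * pauli_entry p b c) = of_bool (a = c)"
  by (cases p) (auto simp: numeral_2_eq_2 less_Suc_eq)

lemma cnj_pauli_entry: "a < 2 \<Longrightarrow> b < 2 \<Longrightarrow> cnj (pauli_entry p b a) = pauli_entry p a b"
  by (cases p) (auto simp: numeral_2_eq_2 less_Suc_eq)

lemma pauli_string_mat_square: "pauli_string_mat s * pauli_string_mat s = 1\<^sub>m (2^length s)"
proof (rule eq_matI)
  fix i j
  assume "i < dim_row (1\<^sub>m (2^length s) :: complex mat)" "j < dim_col (1\<^sub>m (2^length s) :: complex mat)"
  then have ij: "i < 2^length s" "j < 2^length s" by simp_all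
  let ?e = "\<lambda>k. pauli_entry (s ! k)" and ?bit = "\<lambda>l k. l div 2^k mod 2"
  have "(pauli_string_mat s * pauli_string_mat s) $$ (i, j)
      = (\<Sum>l<2^length s. \<Prod>k<length s. ?e k (?bit i k) (?bit l k) * ?e k (?bit l k) (?bit j k))"
    using ij by (simp add: scalar_prod_def lessThan_atLeast0 index_pauli_string_mat prod.distrib)
  also have "\<dots> = (\<Prod>k<length s. \<Sum>b<2. ?e k (?bit i k) b * ?e k b (?bit j k))"
    by (rule sum_prod_bits)
  also have "\<dots> = (\<Prod>k<length s. of_bool (?bit i k = ?bit j k))"
    by (simp add: pauli_entry_square)
  also have "\<dots> = of_bool (i = j)"
    using eq_if_low_bits_eq[OF ij] by (auto simp: prod_zero)
  finally show "(pauli_string_mat s * pauli_string_mat s) $$ (i, j) = 1\<^sub>m (2^length s) $$ (i, j)"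
    using ij by simp
qed simp_all

lemma mat_adjoint_pauli_string_mat: "mat_adjoint (pauli_string_mat s) = pauli_string_mat s"
  by (rule eq_matI) (simp_all add: index_pauli_string_mat cnj_prod cnj_pauli_entry)

definition quadratic_form :: "nat \<Rightarrow> complex mat \<Rightarrow> (nat \<Rightarrow> complex) \<Rightarrow> complex" where
  "quadratic_form d A x = (\<Sum>i<d. \<Sum>j<d. cnj (x i) * A $$ (i, j) * x j)"

definition positive_mat :: "nat \<Rightarrow> complex mat \<Rightarrow> bool" where
  "positive_mat d A \<longleftrightarrow>
     A \<in> carrier_mat d d \<and> mat_adjoint A = A \<and> (\<forall>x. 0 \<le> Re (quadratic_form d A x))"

lemma density_mat_iff_positive_mat:
  "density_mat d \<rho> \<longleftrightarrow> positive_mat d \<rho> \<and> mat_trace \<rho> = 1"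
  unfolding density_mat_def positive_mat_def quadratic_form_def
  using mat_adjoint_eq_iff[of \<rho> d] by blast

lemma sum_swap_pairs:
  "(\<Sum>i\<in>A. \<Sum>j\<in>B. \<Sum>k\<in>C. \<Sum>l\<in>D. f i j k l)
    = (\<Sum>k\<in>C. \<Sum>l\<in>D. \<Sum>i\<in>A. \<Sum>j\<in>B. (f i j k l :: 'a::comm_monoid_add))"
proof -
  have "(\<Sum>i\<in>A. \<Sum>j\<in>B. \<Sum>k\<in>C. \<Sum>l\<in>D. f i j k l) = (\<Sum>(i, j)\<in>A \<times> B. \<Sum>(k, l)\<in>C \<times> D. f i j k l)"
    by (simp only: sum.cartesian_product[symmetric])
  also have "\<dots> = (\<Sum>(k, l)\<in>C \<times> D. \<Sum>(i, j)\<in>A \<times> B. f i j k l)"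
    using sum.swap[of "\<lambda>p q. f (fst p) (snd p) (fst q) (snd q)" "C \<times> D" "A \<times> B"]
    by (simp add: split_def)
  also have "\<dots> = (\<Sum>k\<in>C. \<Sum>l\<in>D. \<Sum>i\<in>A. \<Sum>j\<in>B. f i j k l)"
    by (simp only: sum.cartesian_product[symmetric])
  finally show ?thesis .
qed

lemma hermitian_entry:
  assumes "A \<in> carrier_mat d d" "mat_adjoint A = A" "i < d" "j < d"
  shows "cnj (A $$ (j, i)) = A $$ (i, j)"
proof -
  have "mat_adjoint A $$ (i, j) = cnj (A $$ (j, i))" using assms(1,3,4) by simp
  then show ?thesis using assms(2) by simp
qed

lemma quadratic_form_conj:
  assumes X: "X \<in> carrier_mat d d" "mat_adjoint X = X" and A: "A \<in> carrier_mat d d"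
  shows "quadratic_form d (X * A * X) x = quadratic_form d A (\<lambda>k. \<Sum>j<d. X $$ (k, j) * x j)"
proof -
  have entry: "(X * A * X) $$ (i, j) = (\<Sum>k<d. \<Sum>l<d. X $$ (i, k) * A $$ (k, l) * X $$ (l, j))"
    if "i < d" "j < d" for i j
    using that X A by (simp add: scalar_prod_def lessThan_atLeast0 sum_distrib_left mult.assoc)
  have "quadratic_form d (X * A * X) x
      = (\<Sum>i<d. \<Sum>j<d. \<Sum>k<d. \<Sum>l<d. cnj (x i) * X $$ (i, k) * A $$ (k, l) * X $$ (l, j) * x j)"
    unfolding quadratic_form_def
    by (intro sum.cong refl) (simp add: entry sum_distrib_left sum_distrib_right mult.assoc)
  also have "\<dots>
      = (\<Sum>k<d. \<Sum>l<d. \<Sum>i<d. \<Sum>j<d. cnj (x i) * X $$ (i, k) * A $$ (k, l) * X $$ (l, j) * x j)"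
    by (rule sum_swap_pairs)
  also have "\<dots> = quadratic_form d A (\<lambda>k. \<Sum>j<d. X $$ (k, j) * x j)"
    unfolding quadratic_form_def
    by (intro sum.cong refl)
      (simp add: cnj_sum hermitian_entry[OF X] sum_distrib_left sum_distrib_right
        mult.assoc mult.left_commute, rule sum.swap)
  finally show ?thesis .
qed

lemma positive_mat_conj:
  assumes A: "positive_mat d A" and X: "X \<in> carrier_mat d d" "mat_adjoint X = X"
  shows "positive_mat d (X * A * X)"
proof -
  have A_carrier: "A \<in> carrier_mat d d" and A_herm: "mat_adjoint A = A"
    using A by (simp_all add: positive_mat_def)
  have "mat_adjoint (X * A * X) = mat_adjoint X * mat_adjoint (X * A)"
    by (rule mat_adjoint_mult) (use X A_carrier in auto)
  also have "mat_adjoint (X * A) = mat_adjoint A * mat_adjoint X"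
    by (rule mat_adjoint_mult) (use X A_carrier in auto)
  also have "mat_adjoint X * (mat_adjoint A * mat_adjoint X) = X * A * X"
    using X A_carrier A_herm by (simp add: assoc_mult_mat[of _ d d _ d _ d])
  finally have "mat_adjoint (X * A * X) = X * A * X" .
  moreover have "0 \<le> Re (quadratic_form d (X * A * X) x)" for x
    unfolding quadratic_form_conj[OF X A_carrier] using A by (simp add: positive_mat_def)
  ultimately show ?thesis
    using X A_carrier by (auto simp: positive_mat_def)
qed

lemma quadratic_form_supported:
  assumes K: "K \<subseteq> {..<d}" and x: "\<forall>i. i \<notin> K \<longrightarrow> x i = 0"
  shows "quadratic_form d A x = (\<Sum>i\<in>K. \<Sum>j\<in>K. cnj (x i) * A $$ (i, j) * x j)"
proof -
  have "(\<Sum>j<d. cnj (x i) * A $$ (i, j) * x j) = (\<Sum>j\<in>K. cnj (x i) * A $$ (i, j) * x j)" for i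
    by (rule sum.mono_neutral_right) (use K x in auto)
  moreover have "(\<Sum>i<d. \<Sum>j\<in>K. cnj (x i) * A $$ (i, j) * x j)
      = (\<Sum>i\<in>K. \<Sum>j\<in>K. cnj (x i) * A $$ (i, j) * x j)"
    by (rule sum.mono_neutral_right) (use K x in auto)
  ultimately show ?thesis by (simp add: quadratic_form_def)
qed

lemma positive_mat_diag_real: "positive_mat d A \<Longrightarrow> i < d \<Longrightarrow> Im (A $$ (i, i)) = 0"
  using hermitian_entry[of A d i i] by (simp add: positive_mat_def complex_eq_iff)

lemma positive_mat_diag_nonneg:
  assumes A: "positive_mat d A" and i: "i < d"
  shows "0 \<le> Re (A $$ (i, i))"
proof -
  have "quadratic_form d A (\<lambda>k. of_bool (k = i)) = A $$ (i, i)"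
    using quadratic_form_supported[of "{i}" d "\<lambda>k. of_bool (k = i)" A] i by simp
  moreover have "0 \<le> Re (quadratic_form d A (\<lambda>k. of_bool (k = i)))"
    using A by (simp add: positive_mat_def)
  ultimately show ?thesis by simp
qed

lemma positive_mat_trace:
  assumes A: "positive_mat d A"
  shows "Im (mat_trace A) = 0" "0 \<le> Re (mat_trace A)"
proof -
  have "dim_row A = d" using A carrier_matD(1) by (auto simp: positive_mat_def)
  then have "Im (mat_trace A) = (\<Sum>i<d. Im (A $$ (i, i)))"
    and "Re (mat_trace A) = (\<Sum>i<d. Re (A $$ (i, i)))"
    by (simp_all add: mat_trace_def)
  then show "Im (mat_trace A) = 0" "0 \<le> Re (mat_trace A)"
    using positive_mat_diag_real[OF A] positive_mat_diag_nonneg[OF A] by (auto intro!: sum_nonneg)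
qed

lemma positive_mat_trace_zero:
  assumes A: "positive_mat d A" and tr: "mat_trace A = 0"
  shows "A = 0\<^sub>m d d"
proof -
  have A_carrier: "A \<in> carrier_mat d d" using A by (simp add: positive_mat_def)
  have "(\<Sum>i<d. Re (A $$ (i, i))) = 0"
    using tr A_carrier by (simp add: mat_trace_def flip: Re_sum)
  then have "\<forall>i\<in>{..<d}. Re (A $$ (i, i)) = 0"
    using positive_mat_diag_nonneg[OF A] by (subst (asm) sum_nonneg_eq_0_iff) auto
  then have diag: "A $$ (i, i) = 0" if "i < d" for i
    using that positive_mat_diag_real[OF A] by (simp add: complex_eq_iff)
  have "A $$ (a, b) = 0" if ab: "a < d" "b < d" "a \<noteq> b" for a b
  proof -
    define t where "t = - cnj (A $$ (a, b))"
    define x where "x k = (if k = a then 1 else if k = b then t else 0)" for k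
    have "A $$ (b, a) = cnj (A $$ (a, b))"
      using hermitian_entry[of A d b a] A ab by (simp add: positive_mat_def)
    then have "quadratic_form d A x = - 2 * (A $$ (a, b) * cnj (A $$ (a, b)))"
      using quadratic_form_supported[of "{a, b}" d x A] ab diag
      by (simp add: x_def t_def algebra_simps)
    moreover have "0 \<le> Re (quadratic_form d A x)" using A by (simp add: positive_mat_def)
    ultimately have "(Re (A $$ (a, b)))\<^sup>2 + (Im (A $$ (a, b)))\<^sup>2 \<le> 0"
      by (simp add: complex_mult_cnj)
    then show ?thesis by (simp add: complex_eq_iff sum_power2_le_zero_iff)
  qed
  then show ?thesis using A_carrier diag by (intro eq_matI) auto
qed

lemma positive_mat_smult:
  assumes "positive_mat d A" "0 \<le> c"
  shows "positive_mat d (complex_of_real c \<cdot>\<^sub>m A)"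
proof -
  have "mat_adjoint (complex_of_real c \<cdot>\<^sub>m A) = complex_of_real c \<cdot>\<^sub>m mat_adjoint A"
    by (intro eq_matI) auto
  moreover have "quadratic_form d (complex_of_real c \<cdot>\<^sub>m A) x = c * quadratic_form d A x" for x
    unfolding quadratic_form_def sum_distrib_left
    using assms by (intro sum.cong refl) (auto simp: positive_mat_def algebra_simps)
  ultimately show ?thesis using assms by (auto simp: positive_mat_def)
qed

lemma density_mat_normalize:
  assumes "positive_mat d A" and "mat_trace A = of_real t" and "0 < t"
  shows "density_mat d (complex_of_real (1 / t) \<cdot>\<^sub>m A)"
  using assms positive_mat_smult[OF assms(1), of "1 / t"]
  by (auto simp: density_mat_iff_positive_mat positive_mat_def mat_trace_smult)

lemma mat_trace_mult_eigen:
  assumes "\<rho> \<in> carrier_mat d d" "A \<in> carrier_mat d d" "T \<in> carrier_mat d d"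
    and "T * \<rho> = s \<cdot>\<^sub>m \<rho>"
  shows "mat_trace (\<rho> * (A * T)) = s * mat_trace (\<rho> * A)"
proof -
  have "mat_trace (\<rho> * (A * T)) = mat_trace ((\<rho> * A) * T)"
    using assms by simp
  also have "\<dots> = mat_trace (T * (\<rho> * A))"
    using assms by (intro mat_trace_mult_comm) auto
  also have "T * (\<rho> * A) = (T * \<rho>) * A"
    using assms(1-3) by simp
  also have "\<dots> = s \<cdot>\<^sub>m (\<rho> * A)"
    using assms by (simp add: mult_smult_assoc_mat)
  also have "mat_trace \<dots> = s * mat_trace (\<rho> * A)"
    using assms by (simp add: mat_trace_smult[of _ d])
  finally show ?thesis .
qed

locale hermitian_involution =
  fixes d :: nat and T :: "complex mat"
  assumes carrier [simp]: "T \<in> carrier_mat d d"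
    and square: "T * T = 1\<^sub>m d"
    and hermitian: "mat_adjoint T = T"
begin

definition eigenproj :: "complex \<Rightarrow> complex mat" where
  "eigenproj s = (1 / 2) \<cdot>\<^sub>m (1\<^sub>m d + s \<cdot>\<^sub>m T)"

lemma dim_T [simp]: "dim_row T = d" "dim_col T = d"
  using carrier_matD[OF carrier] by auto

(* Dimension-instantiated, so that the simplifier can discharge the carrier premises. *)
lemmas assoc_mult_square = assoc_mult_mat[of _ d d _ d _ d]
lemmas mult_square_carrier = mult_carrier_mat[of _ d d _ d]

lemma eigenproj_carrier: "eigenproj s \<in> carrier_mat d d"
  by (simp add: eigenproj_def)

lemma dim_eigenproj [simp]: "dim_row (eigenproj s) = d" "dim_col (eigenproj s) = d"
  by (simp_all add: eigenproj_def)

lemma mult_eigenproj: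
  assumes "A \<in> carrier_mat d d"
  shows "A * eigenproj s = (1 / 2) \<cdot>\<^sub>m (A + s \<cdot>\<^sub>m (A * T))"
proof -
  have "A * eigenproj s = (1 / 2) \<cdot>\<^sub>m (A * (1\<^sub>m d + s \<cdot>\<^sub>m T))"
    unfolding eigenproj_def by (rule mult_smult_distrib[OF assms, where nc = d]) simp
  also have "A * (1\<^sub>m d + s \<cdot>\<^sub>m T) = A * 1\<^sub>m d + A * (s \<cdot>\<^sub>m T)"
    by (rule mult_add_distrib_mat[OF assms, where nc = d]) simp_all
  finally show ?thesis using assms by (simp add: mult_smult_distrib[OF assms carrier])
qed

lemma eigenproj_mult:
  assumes "A \<in> carrier_mat d d"
  shows "eigenproj s * A = (1 / 2) \<cdot>\<^sub>m (A + s \<cdot>\<^sub>m (T * A))"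
proof -
  have "eigenproj s * A = (1 / 2) \<cdot>\<^sub>m ((1\<^sub>m d + s \<cdot>\<^sub>m T) * A)"
    unfolding eigenproj_def by (rule mult_smult_assoc_mat[OF _ assms, where nr = d]) simp
  also have "(1\<^sub>m d + s \<cdot>\<^sub>m T) * A = 1\<^sub>m d * A + (s \<cdot>\<^sub>m T) * A"
    by (rule add_mult_distrib_mat[OF _ _ assms, where nr = d]) simp_all
  finally show ?thesis using assms by (simp add: mult_smult_assoc_mat[OF carrier assms])
qed

lemma T_mult_eigenproj:
  assumes "s \<in> {1, -1}"
  shows "T * eigenproj s = s \<cdot>\<^sub>m eigenproj s"
proof -
  have "T * eigenproj s = (1 / 2) \<cdot>\<^sub>m (T + s \<cdot>\<^sub>m (T * T))"
    by (rule mult_eigenproj[OF carrier])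
  then show ?thesis
    using assms by (auto simp: square eigenproj_def intro!: eq_matI)
qed

lemma eigenproj_idem:
  assumes "s \<in> {1, -1}"
  shows "eigenproj s * eigenproj s = eigenproj s"
proof -
  have "eigenproj s * eigenproj s = (1 / 2) \<cdot>\<^sub>m (eigenproj s + s \<cdot>\<^sub>m (s \<cdot>\<^sub>m eigenproj s))"
    unfolding T_mult_eigenproj[OF assms, symmetric] by (rule eigenproj_mult[OF eigenproj_carrier])
  then show ?thesis
    using assms by (auto intro!: eq_matI)
qed

lemma eigenproj_sum: "eigenproj 1 + eigenproj (-1) = 1\<^sub>m d"
  by (auto simp: eigenproj_def field_simps intro!: eq_matI)

lemma mat_adjoint_eigenproj:
  assumes "s \<in> {1, -1}"
  shows "mat_adjoint (eigenproj s) = eigenproj s"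
  using assms hermitian_entry[OF carrier hermitian]
  by (auto simp: eigenproj_def intro!: eq_matI)

lemma commute_eigenproj:
  assumes "A \<in> carrier_mat d d" "A * T = T * A"
  shows "A * eigenproj s = eigenproj s * A"
  using assms by (simp add: mult_eigenproj eigenproj_mult)

lemma mat_trace_compress:
  assumes s: "s \<in> {1, -1}" and \<rho>: "\<rho> \<in> carrier_mat d d"
    and A: "A \<in> carrier_mat d d" "A * T = T * A"
  shows "mat_trace (eigenproj s * \<rho> * eigenproj s * A) = mat_trace (\<rho> * (A * eigenproj s))"
proof -
  let ?P = "eigenproj s"
  have P: "?P \<in> carrier_mat d d" by (rule eigenproj_carrier)
  have "mat_trace (?P * \<rho> * ?P * A) = mat_trace (?P * (\<rho> * ?P * A))"
    using \<rho> A P by (simp add: assoc_mult_square mult_square_carrier)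
  also have "\<dots> = mat_trace ((\<rho> * ?P * A) * ?P)"
    using \<rho> A P by (intro mat_trace_mult_comm) auto
  also have "(\<rho> * ?P * A) * ?P = \<rho> * ((?P * ?P) * A)"
    using \<rho> A P commute_eigenproj[OF A] by (simp add: assoc_mult_square mult_square_carrier)
  also have "\<dots> = \<rho> * (A * ?P)"
    using eigenproj_idem[OF s] commute_eigenproj[OF A] by simp
  finally show ?thesis .
qed

lemma mat_trace_decomposition:
  assumes \<rho>: "\<rho> \<in> carrier_mat d d" and A: "A \<in> carrier_mat d d" "A * T = T * A"
  shows "mat_trace (\<rho> * A) = mat_trace (eigenproj 1 * \<rho> * eigenproj 1 * A)
    + mat_trace (eigenproj (-1) * \<rho> * eigenproj (-1) * A)"
proof -
  have "\<rho> * (A * eigenproj 1) + \<rho> * (A * eigenproj (-1))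
      = \<rho> * (A * eigenproj 1 + A * eigenproj (-1))"
    by (rule mult_add_distrib_mat[symmetric]) (use \<rho> A eigenproj_carrier in auto)
  also have "A * eigenproj 1 + A * eigenproj (-1) = A * (eigenproj 1 + eigenproj (-1))"
    by (rule mult_add_distrib_mat[symmetric]) (use A eigenproj_carrier in auto)
  finally have "\<rho> * A = \<rho> * (A * eigenproj 1) + \<rho> * (A * eigenproj (-1))"
    using A by (simp add: eigenproj_sum)
  then show ?thesis
    using \<rho> A eigenproj_carrier by (simp add: mat_trace_compress mat_trace_add[of _ d])
qed

(* rho' is the normalized compression; it is only meaningful when the weight t is positive,
   but for t = 0 the compression itself vanishes, so the trace identity holds regardless. *)
lemma compressed_state:
  assumes \<rho>: "density_mat d \<rho>" and s: "s \<in> {1, -1}"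
  obtains t \<rho>' where "0 \<le> t" "mat_trace (eigenproj s * \<rho> * eigenproj s) = of_real t"
    and "0 < t \<Longrightarrow> density_mat d \<rho>' \<and> T * \<rho>' = s \<cdot>\<^sub>m \<rho>'"
    and "\<And>A. A \<in> carrier_mat d d \<Longrightarrow>
      mat_trace (eigenproj s * \<rho> * eigenproj s * A) = of_real t * mat_trace (\<rho>' * A)"
proof -
  let ?P = "eigenproj s"
  define \<sigma> where "\<sigma> = ?P * \<rho> * ?P"
  define t where "t = Re (mat_trace \<sigma>)"
  define \<rho>' where "\<rho>' = complex_of_real (1 / t) \<cdot>\<^sub>m \<sigma>"
  have \<rho>_carrier: "\<rho> \<in> carrier_mat d d"
    using \<rho> by (simp add: density_mat_iff_positive_mat positive_mat_def)
  have \<sigma>: "positive_mat d \<sigma>"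
    unfolding \<sigma>_def using \<rho> mat_adjoint_eigenproj[OF s]
    by (intro positive_mat_conj) (simp_all add: density_mat_iff_positive_mat eigenproj_carrier)
  then have \<sigma>_carrier: "\<sigma> \<in> carrier_mat d d" by (simp add: positive_mat_def)
  have trace: "mat_trace \<sigma> = of_real t" "0 \<le> t"
    using positive_mat_trace[OF \<sigma>] by (simp_all add: t_def complex_eq_iff)
  have P: "?P \<in> carrier_mat d d" by (rule eigenproj_carrier)
  have "T * \<sigma> = (T * ?P) * \<rho> * ?P"
    using \<rho>_carrier P by (simp add: \<sigma>_def assoc_mult_square mult_square_carrier)
  also have "\<dots> = s \<cdot>\<^sub>m \<sigma>"
    using \<rho>_carrier P
    by (simp add: T_mult_eigenproj[OF s] \<sigma>_def mult_smult_assoc_mat[of _ d d] mult_square_carrier)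
  finally have "T * \<rho>' = complex_of_real (1 / t) \<cdot>\<^sub>m (s \<cdot>\<^sub>m \<sigma>)"
    unfolding \<rho>'_def using \<sigma>_carrier by (simp add: mult_smult_distrib[OF carrier])
  then have "T * \<rho>' = s \<cdot>\<^sub>m \<rho>'"
    using \<sigma>_carrier by (auto simp: \<rho>'_def intro!: eq_matI)
  moreover have "density_mat d \<rho>'" if "0 < t"
    unfolding \<rho>'_def using \<sigma> trace(1) that by (rule density_mat_normalize)
  moreover have "mat_trace (\<sigma> * A) = of_real t * mat_trace (\<rho>' * A)"
    if A: "A \<in> carrier_mat d d" for A
  proof (cases "t = 0")
    case True
    then have "\<sigma> = 0\<^sub>m d d" using positive_mat_trace_zero[OF \<sigma>] trace(1) by simp
    then show ?thesis using A True by (simp add: mat_trace_def)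
  next
    case False
    then show ?thesis
      using \<sigma>_carrier A by (simp add: \<rho>'_def mult_smult_assoc_mat mat_trace_smult[of _ d])
  qed
  ultimately show ?thesis
    using that[of t \<rho>'] trace unfolding \<sigma>_def by blast
qed

end

lemma commute_mult_if_commute_or_anticommute:
  fixes A X Y :: "'a::comm_ring_1 mat"
  assumes carrier: "A \<in> carrier_mat d d" "X \<in> carrier_mat d d" "Y \<in> carrier_mat d d"
    and same: "(A * X = X * A \<and> A * Y = Y * A) \<or> (A * X = - (X * A) \<and> A * Y = - (Y * A))"
  shows "A * (X * Y) = (X * Y) * A"
proof -
  have assoc: "P * (Q * R) = (P * Q) * R"
    if "P \<in> carrier_mat d d" "Q \<in> carrier_mat d d" "R \<in> carrier_mat d d" for P Q R :: "'a mat"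
    using that by simp
  note assoc_AXY = assoc[OF carrier(1-3)] and assoc_XAY = assoc[OF carrier(2,1,3)]
    and assoc_XYA = assoc[OF carrier(2,3,1)]
  from same show ?thesis
  proof
    assume "A * X = X * A \<and> A * Y = Y * A"
    then have AX: "A * X = X * A" and AY: "A * Y = Y * A" by auto
    have "A * (X * Y) = (X * A) * Y" by (simp only: assoc_AXY AX)
    also have "\<dots> = X * (Y * A)" by (simp only: assoc_XAY[symmetric] AY)
    finally show ?thesis by (simp only: assoc_XYA)
  next
    assume "A * X = - (X * A) \<and> A * Y = - (Y * A)"
    then have AX: "A * X = - (X * A)" and AY: "A * Y = - (Y * A)" by auto
    have "A * (X * Y) = - (X * A) * Y" by (simp only: assoc_AXY AX)
    also have "\<dots> = - (X * (A * Y))"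
      using carrier by (simp add: carrier_matD)
    also have "\<dots> = X * (Y * A)"
      using carrier by (simp add: AY carrier_matD)
    finally show ?thesis by (simp only: assoc_XYA)
  qed
qed

lemma hermitian_involution_pauli_string_mat:
  "hermitian_involution (2^length s) (pauli_string_mat s)"
  by unfold_locales
    (simp_all add: pauli_string_mat_carrier pauli_string_mat_square mat_adjoint_pauli_string_mat)

lemma hermitian_involution_mult:
  assumes X: "hermitian_involution d X" and Y: "hermitian_involution d Y" and XY: "X * Y = Y * X"
  shows "hermitian_involution d (X * Y)"
proof
  have carrier: "X \<in> carrier_mat d d" "Y \<in> carrier_mat d d"
    using X Y by (simp_all add: hermitian_involution_def)
  then show "X * Y \<in> carrier_mat d d" by simp
  have "(X * Y) * (X * Y) = X * (Y * (X * Y))"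
    by (rule assoc_mult_mat) (use carrier in auto)
  also have "Y * (X * Y) = (Y * X) * Y"
    by (rule assoc_mult_mat[symmetric]) (use carrier in auto)
  also have "\<dots> = X * (Y * Y)"
    unfolding XY[symmetric] by (rule assoc_mult_mat) (use carrier in auto)
  also have "X * (X * (Y * Y)) = (X * X) * (Y * Y)"
    by (rule assoc_mult_mat[symmetric]) (use carrier in auto)
  also have "\<dots> = 1\<^sub>m d"
    using X Y by (simp add: hermitian_involution_def)
  finally show "(X * Y) * (X * Y) = 1\<^sub>m d" .
  show "mat_adjoint (X * Y) = X * Y"
    using X Y XY carrier by (simp add: hermitian_involution_def mat_adjoint_mult[of _ d d _ d])
qed

definition weighted_sq_expectation ::
  "nat set \<Rightarrow> (nat \<Rightarrow> real) \<Rightarrow> (nat \<Rightarrow> complex mat) \<Rightarrow> complex mat \<Rightarrow> real" where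
  "weighted_sq_expectation J c B \<rho> = (\<Sum>i\<in>J. c i * (Re (mat_trace (\<rho> * B i)))\<^sup>2)"

lemma square_convex_combination:
  fixes p q x y :: real
  assumes "0 \<le> p" "0 \<le> q" "p + q = 1"
  shows "(p * x + q * y)\<^sup>2 \<le> p * x\<^sup>2 + q * y\<^sup>2"
proof -
  have "p * x\<^sup>2 + q * y\<^sup>2 - (p * x + q * y)\<^sup>2 = p * q * (x - y)\<^sup>2"
  proof -
    have q: "q = 1 - p" using assms(3) by simp
    show ?thesis unfolding q by (simp add: power2_eq_square algebra_simps)
  qed
  moreover have "0 \<le> p * q * (x - y)\<^sup>2" using assms by simp
  ultimately show ?thesis by linarith
qed

lemma weighted_sq_expectation_convex:
  assumes c: "\<forall>i\<in>J. 0 \<le> c i" and pq: "0 \<le> p" "0 \<le> q" "p + q = 1"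
    and mix: "\<forall>i\<in>J. Re (mat_trace (\<rho> * B i))
      = p * Re (mat_trace (\<rho>\<^sub>1 * B i)) + q * Re (mat_trace (\<rho>\<^sub>2 * B i))"
  shows "weighted_sq_expectation J c B \<rho>
    \<le> p * weighted_sq_expectation J c B \<rho>\<^sub>1 + q * weighted_sq_expectation J c B \<rho>\<^sub>2"
proof -
  have "weighted_sq_expectation J c B \<rho>
      \<le> (\<Sum>i\<in>J. c i * (p * (Re (mat_trace (\<rho>\<^sub>1 * B i)))\<^sup>2 + q * (Re (mat_trace (\<rho>\<^sub>2 * B i)))\<^sup>2))"
    unfolding weighted_sq_expectation_def
    using c mix square_convex_combination[OF pq] by (intro sum_mono) (simp add: mult_left_mono)
  also have "\<dots> = p * weighted_sq_expectation J c B \<rho>\<^sub>1 + q * weighted_sq_expectation J c B \<rho>\<^sub>2"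
    by (simp add: weighted_sq_expectation_def sum.distrib sum_distrib_left algebra_simps)
  finally show ?thesis .
qed

context hermitian_involution
begin

lemma exists_eigenstate_improving:
  assumes \<rho>: "density_mat d \<rho>" and c: "\<forall>i\<in>J. 0 \<le> c i"
    and B: "\<forall>i\<in>J. B i \<in> carrier_mat d d \<and> B i * T = T * B i"
  obtains \<rho>' s where "density_mat d \<rho>'" "s \<in> {1, -1}" "T * \<rho>' = s \<cdot>\<^sub>m \<rho>'"
    "weighted_sq_expectation J c B \<rho> \<le> weighted_sq_expectation J c B \<rho>'"
proof -
  let ?W = "weighted_sq_expectation J c B"
  obtain t\<^sub>1 \<rho>\<^sub>1 where t\<^sub>1: "0 \<le> t\<^sub>1" "mat_trace (eigenproj 1 * \<rho> * eigenproj 1) = of_real t\<^sub>1"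
    and \<rho>\<^sub>1: "0 < t\<^sub>1 \<Longrightarrow> density_mat d \<rho>\<^sub>1 \<and> T * \<rho>\<^sub>1 = 1 \<cdot>\<^sub>m \<rho>\<^sub>1"
    and tr\<^sub>1: "\<And>A. A \<in> carrier_mat d d \<Longrightarrow>
      mat_trace (eigenproj 1 * \<rho> * eigenproj 1 * A) = of_real t\<^sub>1 * mat_trace (\<rho>\<^sub>1 * A)"
    using compressed_state[OF \<rho>, of 1] by auto
  obtain t\<^sub>2 \<rho>\<^sub>2 where t\<^sub>2: "0 \<le> t\<^sub>2" "mat_trace (eigenproj (-1) * \<rho> * eigenproj (-1)) = of_real t\<^sub>2"
    and \<rho>\<^sub>2: "0 < t\<^sub>2 \<Longrightarrow> density_mat d \<rho>\<^sub>2 \<and> T * \<rho>\<^sub>2 = (-1) \<cdot>\<^sub>m \<rho>\<^sub>2"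
    and tr\<^sub>2: "\<And>A. A \<in> carrier_mat d d \<Longrightarrow>
      mat_trace (eigenproj (-1) * \<rho> * eigenproj (-1) * A) = of_real t\<^sub>2 * mat_trace (\<rho>\<^sub>2 * A)"
    using compressed_state[OF \<rho>, of "-1"] by auto
  have \<rho>_carrier: "\<rho> \<in> carrier_mat d d" and "mat_trace \<rho> = 1"
    using \<rho> by (simp_all add: density_mat_iff_positive_mat positive_mat_def)
  then have "of_real (t\<^sub>1 + t\<^sub>2) = (1 :: complex)"
    using mat_trace_decomposition[OF \<rho>_carrier, of "1\<^sub>m d"] t\<^sub>1(2) t\<^sub>2(2) \<rho>_carrier eigenproj_carrier
    by (simp add: mult_square_carrier)
  then have t_sum: "t\<^sub>1 + t\<^sub>2 = 1" by (simp only: of_real_eq_1_iff)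
  have "\<forall>i\<in>J. Re (mat_trace (\<rho> * B i))
      = t\<^sub>1 * Re (mat_trace (\<rho>\<^sub>1 * B i)) + t\<^sub>2 * Re (mat_trace (\<rho>\<^sub>2 * B i))"
    using B \<rho>_carrier by (simp add: mat_trace_decomposition tr\<^sub>1 tr\<^sub>2)
  then have W_mix: "?W \<rho> \<le> t\<^sub>1 * ?W \<rho>\<^sub>1 + t\<^sub>2 * ?W \<rho>\<^sub>2"
    using c t\<^sub>1(1) t\<^sub>2(1) t_sum by (rule weighted_sq_expectation_convex[rotated 4])
  show ?thesis
  proof (cases "0 < t\<^sub>1 \<and> (t\<^sub>2 = 0 \<or> ?W \<rho>\<^sub>2 \<le> ?W \<rho>\<^sub>1)")
    case True
    then have "t\<^sub>1 * ?W \<rho>\<^sub>1 + t\<^sub>2 * ?W \<rho>\<^sub>2 \<le> ?W \<rho>\<^sub>1"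
      using t\<^sub>1(1) t\<^sub>2(1) t_sum by (auto intro: convex_bound_le)
    then show ?thesis using True \<rho>\<^sub>1 W_mix by (intro that[of \<rho>\<^sub>1 1]) auto
  next
    case False
    then have "0 < t\<^sub>2" and "t\<^sub>1 * ?W \<rho>\<^sub>1 + t\<^sub>2 * ?W \<rho>\<^sub>2 \<le> ?W \<rho>\<^sub>2"
      using t\<^sub>1(1) t\<^sub>2(1) t_sum by (auto intro: convex_bound_le)
    then show ?thesis using \<rho>\<^sub>2 W_mix by (intro that[of \<rho>\<^sub>2 "-1"]) auto
  qed
qed

end

definition copy_map :: "nat \<Rightarrow> nat \<Rightarrow> nat \<Rightarrow> nat" where
  "copy_map n v k = (if k = n then v else k)"

lemma copy_vertex_eq: "copy_vertex n E v i j = E (copy_map n v i) (copy_map n v j)"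
  by (simp add: copy_vertex_def copy_map_def)

definition merge_weight :: "nat \<Rightarrow> nat \<Rightarrow> (nat \<Rightarrow> real) \<Rightarrow> nat \<Rightarrow> real" where
  "merge_weight n v w = w(v := w v + w n)"

lemma merge_weight_eq: "merge_weight n v w i = w i + (if i = v then w n else 0)"
  by (simp add: merge_weight_def)

lemma sum_merge_weight:
  "finite J \<Longrightarrow> sum (merge_weight n v w) J = sum w J + (if v \<in> J then w n else 0)"
  by (simp add: merge_weight_eq sum.distrib)

lemma sum_mult_merge_weight:
  assumes "v < n" and "f n = f v"
  shows "(\<Sum>i<Suc n. w i * f i) = (\<Sum>i<n. merge_weight n v w i * f i)"
proof -
  have "(\<Sum>i<n. (if i = v then w n else 0) * f i) = (\<Sum>i<n. if i = v then w n * f v else 0)"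
    by (rule sum.cong) auto
  then show ?thesis using assms by (simp add: merge_weight_eq distrib_right sum.distrib)
qed

lemma realization_copy_vertexD:
  assumes "realization (Suc n) (copy_vertex n E v) m S"
  shows "realization n E m S"
proof -
  have "copy_vertex n E v i j = E i j" if "i < n" "j < n" for i j
    using that by (simp add: copy_vertex_eq copy_map_def)
  then show ?thesis using assms unfolding realization_def by (metis less_SucI)
qed

lemma independent_set_copy_vertex_iff:
  "independent_set (copy_vertex n E v) I \<longleftrightarrow> independent_set E (copy_map n v ` I)"
  by (auto simp: independent_set_def copy_vertex_eq)

lemma sum_le_merge_weight_image:
  assumes I: "I \<subseteq> {..<Suc n}" and w: "\<forall>i<Suc n. 0 \<le> w i" and v: "v < n"
  shows "sum w I \<le> sum (merge_weight n v w) (copy_map n v ` I)"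
proof (cases "n \<in> I")
  case False
  then have "copy_map n v ` I = I" by (force simp: copy_map_def)
  moreover have "finite I" using I finite_subset by blast
  ultimately show ?thesis using w by (simp add: sum_merge_weight)
next
  case True
  have image: "copy_map n v ` I = insert v (I - {n})"
    using True by (auto simp: copy_map_def)
  have fin: "finite I" using I finite_subset by blast
  have "sum w I = w n + sum w (I - {n})"
    using True fin by (simp add: sum.remove)
  also have "\<dots> \<le> w n + sum w (insert v (I - {n}))"
    using fin w v by (intro add_left_mono sum_mono2) auto
  also have "\<dots> = sum (merge_weight n v w) (copy_map n v ` I)"
    using fin v by (simp add: image sum_merge_weight)
  finally show ?thesis .
qed

lemma sum_merge_weight_preimage:
  assumes J: "J \<subseteq> {..<n}" and v: "v < n"
  shows "sum (merge_weight n v w) J = sum w {k. k < Suc n \<and> copy_map n v k \<in> J}"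
proof -
  have fin: "finite J" using J finite_subset by blast
  have "{k. k < Suc n \<and> copy_map n v k \<in> J} = (if v \<in> J then insert n J else J)"
    using J v by (auto simp: copy_map_def)
  moreover have "n \<notin> J" using J by auto
  ultimately show ?thesis using fin by (simp add: sum_merge_weight)
qed

lemma alpha_copy_vertex:
  assumes v: "v < n" and w: "\<forall>i<Suc n. 0 \<le> w i"
  shows "alpha (Suc n) (copy_vertex n E v) w = alpha n E (merge_weight n v w)"
  unfolding alpha_def
proof (rule Max_eq_if)
  show "finite {sum w I |I. I \<subseteq> {..<Suc n} \<and> independent_set (copy_vertex n E v) I}"
    by (rule finite_subset[of _ "sum w ` Pow {..<Suc n}"]) auto
  show "finite {sum (merge_weight n v w) J |J. J \<subseteq> {..<n} \<and> independent_set E J}"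
    by (rule finite_subset[of _ "sum (merge_weight n v w) ` Pow {..<n}"]) auto
  show "\<forall>a\<in>{sum w I |I. I \<subseteq> {..<Suc n} \<and> independent_set (copy_vertex n E v) I}.
      \<exists>b\<in>{sum (merge_weight n v w) J |J. J \<subseteq> {..<n} \<and> independent_set E J}. a \<le> b"
  proof safe
    fix I assume I: "I \<subseteq> {..<Suc n}" "independent_set (copy_vertex n E v) I"
    have "copy_map n v ` I \<subseteq> {..<n}"
      using I(1) v by (auto simp: copy_map_def)
    then show "\<exists>b\<in>{sum (merge_weight n v w) J |J. J \<subseteq> {..<n} \<and> independent_set E J}. sum w I \<le> b"
      using I sum_le_merge_weight_image[OF I(1) w v] independent_set_copy_vertex_iff by blast
  qed
  show "\<forall>b\<in>{sum (merge_weight n v w) J |J. J \<subseteq> {..<n} \<and> independent_set E J}.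
      \<exists>a\<in>{sum w I |I. I \<subseteq> {..<Suc n} \<and> independent_set (copy_vertex n E v) I}. b \<le> a"
  proof safe
    fix J assume J: "J \<subseteq> {..<n}" "independent_set E J"
    define I where "I = {k. k < Suc n \<and> copy_map n v k \<in> J}"
    have "copy_map n v ` I = J"
      using J(1) by (force simp: I_def copy_map_def)
    then have "independent_set (copy_vertex n E v) I"
      using J(2) by (simp add: independent_set_copy_vertex_iff)
    moreover have "I \<subseteq> {..<Suc n}" by (auto simp: I_def)
    ultimately show "\<exists>a\<in>{sum w I |I. I \<subseteq> {..<Suc n} \<and> independent_set (copy_vertex n E v) I}.
        sum (merge_weight n v w) J \<le> a"
      using sum_merge_weight_preimage[OF J(1) v, of w] unfolding I_def by auto
  qed
qed

(* No boundedness is needed: both suprema are determined by the same set of upper bounds. *)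
lemma Sup_real_eq_if:
  fixes X Y :: "real set"
  assumes "\<forall>x\<in>X. \<exists>y\<in>Y. x \<le> y" and "\<forall>y\<in>Y. \<exists>x\<in>X. y \<le> x"
  shows "Sup X = Sup Y"
proof -
  have "(\<lambda>z. \<forall>x\<in>X. x \<le> z) = (\<lambda>z. \<forall>y\<in>Y. y \<le> z)"
    using assms by (meson order_trans)
  then show ?thesis by (simp add: Sup_real_def)
qed

lemma twin_product_hermitian_involution:
  assumes E: "graph_on n E" and v: "v < n"
    and R: "realization (Suc n) (copy_vertex n E v) m S"
  defines "T \<equiv> pauli_string_mat (S v) * pauli_string_mat (S n)"
  shows "hermitian_involution (2^m) T"
    and "i < Suc n \<Longrightarrow> pauli_string_mat (S i) * T = T * pauli_string_mat (S i)"
proof -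
  let ?A = "\<lambda>i. pauli_string_mat (S i)" and ?E' = "copy_vertex n E v"
  have A: "hermitian_involution (2^m) (?A i)" if "i < Suc n" for i
    using R that hermitian_involution_pauli_string_mat[of "S i"] by (simp add: realization_def)
  have commute: "?A i * ?A j = ?A j * ?A i" if "i < Suc n" "j < Suc n" "\<not> ?E' i j" for i j
    using R that unfolding realization_def by blast
  have anticommute: "?A i * ?A j = - (?A j * ?A i)" if "i < Suc n" "j < Suc n" "?E' i j" for i j
    using R that unfolding realization_def by blast
  have "\<not> ?E' v n"
    using E v by (simp add: copy_vertex_eq copy_map_def graph_on_def)
  then show "hermitian_involution (2^m) T"
    unfolding T_def using A v commute[of v n] by (intro hermitian_involution_mult) auto
  assume i: "i < Suc n"
  have "?E' i n = ?E' i v" using v by (simp add: copy_vertex_eq copy_map_def)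
  then show "?A i * T = T * ?A i"
    unfolding T_def using A i v commute[OF i] anticommute[OF i]
    by (intro commute_mult_if_commute_or_anticommute) (auto simp: hermitian_involution_def)
qed

lemma beta_eq_Sup:
  "beta n m S w = Sup (weighted_sq_expectation {..<n} w (\<lambda>i. pauli_string_mat (S i))
     ` {\<rho>. density_mat (2^m) \<rho>})"
  by (simp add: beta_def weighted_sq_expectation_def image_Collect)

lemma beta_copy_vertex:
  assumes E: "graph_on n E" and v: "v < n"
    and R: "realization (Suc n) (copy_vertex n E v) m S" and w: "\<forall>i<Suc n. 0 \<le> w i"
  shows "beta (Suc n) m S w = beta n m S (merge_weight n v w)"
proof -
  define d :: nat where "d = 2^m"
  define A where "A = (\<lambda>i. pauli_string_mat (S i))"
  define T where "T = A v * A n"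
  interpret hermitian_involution d T
    using twin_product_hermitian_involution(1)[OF E v R] by (simp add: d_def T_def A_def)
  have AT: "A i * T = T * A i" if "i < Suc n" for i
    using twin_product_hermitian_involution(2)[OF E v R that] by (simp add: T_def A_def)
  have A: "A i \<in> carrier_mat d d" "A i * A i = 1\<^sub>m d" if "i < Suc n" for i
    using R that pauli_string_mat_carrier[of "S i"] pauli_string_mat_square[of "S i"]
    by (auto simp: realization_def A_def d_def)
  have "A v * T = (A v * A v) * A n"
    unfolding T_def by (rule assoc_mult_mat[symmetric]) (use A[of v] A[of n] v in auto)
  also have "\<dots> = A n"
    using A[of v] A[of n] v by simp
  finally have A_n: "A n = A v * T" ..
  let ?W\<^sub>1 = "weighted_sq_expectation {..<Suc n} w A"
    and ?W\<^sub>2 = "weighted_sq_expectation {..<n} (merge_weight n v w) A"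
  have on_eigenstates: "?W\<^sub>1 \<rho> = ?W\<^sub>2 \<rho>"
    if \<rho>: "density_mat d \<rho>" and s: "s \<in> {1, -1}" "T * \<rho> = s \<cdot>\<^sub>m \<rho>" for \<rho> s
  proof -
    have "mat_trace (\<rho> * A n) = s * mat_trace (\<rho> * A v)"
      unfolding A_n using \<rho> A v s(2)
      by (intro mat_trace_mult_eigen) (auto simp: density_mat_iff_positive_mat positive_mat_def)
    then have "(Re (mat_trace (\<rho> * A n)))\<^sup>2 = (Re (mat_trace (\<rho> * A v)))\<^sup>2"
      using s(1) by auto
    then show ?thesis
      unfolding weighted_sq_expectation_def using v by (rule sum_mult_merge_weight[rotated])
  qed
  have improve: "\<exists>\<rho>'. density_mat d \<rho>'
      \<and> weighted_sq_expectation J c A \<rho> \<le> weighted_sq_expectation J c A \<rho>' \<and> ?W\<^sub>1 \<rho>' = ?W\<^sub>2 \<rho>'"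
    if \<rho>: "density_mat d \<rho>" and J: "J \<subseteq> {..<Suc n}" and c: "\<forall>i\<in>J. 0 \<le> c i" for \<rho> J c
  proof -
    have "\<forall>i\<in>J. A i \<in> carrier_mat d d \<and> A i * T = T * A i"
      using J A AT by blast
    then obtain \<rho>' s where "density_mat d \<rho>'" "s \<in> {1, -1}" "T * \<rho>' = s \<cdot>\<^sub>m \<rho>'"
      "weighted_sq_expectation J c A \<rho> \<le> weighted_sq_expectation J c A \<rho>'"
      using exists_eigenstate_improving[OF \<rho> c] by blast
    then show ?thesis using on_eigenstates by blast
  qed
  have "Sup (?W\<^sub>1 ` {\<rho>. density_mat d \<rho>}) = Sup (?W\<^sub>2 ` {\<rho>. density_mat d \<rho>})"
  proof (rule Sup_real_eq_if)
    show "\<forall>x\<in>?W\<^sub>1 ` {\<rho>. density_mat d \<rho>}. \<exists>y\<in>?W\<^sub>2 ` {\<rho>. density_mat d \<rho>}. x \<le> y"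
      using improve[of _ "{..<Suc n}" w] w by fastforce
    show "\<forall>y\<in>?W\<^sub>2 ` {\<rho>. density_mat d \<rho>}. \<exists>x\<in>?W\<^sub>1 ` {\<rho>. density_mat d \<rho>}. y \<le> x"
      using improve[of _ "{..<n}" "merge_weight n v w"] w by (fastforce simp: merge_weight_eq)
  qed
  then show ?thesis
    by (simp add: beta_eq_Sup A_def d_def)
qed

theorem mainTheorem7:
  fixes n v :: nat and E :: "nat \<Rightarrow> nat \<Rightarrow> bool"
  assumes "graph_on n E"
    and "v < n"
    and "hbar_perfect n E"
  shows "hbar_perfect (Suc n) (copy_vertex n E v)"
  unfolding hbar_perfect_def
proof (intro allI impI)
  fix m S and w :: "nat \<Rightarrow> real"
  assume R: "realization (Suc n) (copy_vertex n E v) m S" and w: "\<forall>i<Suc n. 0 \<le> w i"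
  have "\<forall>i<n. 0 \<le> merge_weight n v w i"
    using w by (simp add: merge_weight_eq)
  then have "beta n m S (merge_weight n v w) = alpha n E (merge_weight n v w)"
    using assms(3) realization_copy_vertexD[OF R] by (simp add: hbar_perfect_def)
  then show "beta (Suc n) m S w = alpha (Suc n) (copy_vertex n E v) w"
    using beta_copy_vertex[OF assms(1,2) R w] alpha_copy_vertex[OF assms(2) w] by simp
qed

end
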